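(* For every $n\in\mathbb{N}$ there exists a strongly $n$-connected $2n$-regular oriented graph on $16n+1$ vertices with no Hamilton cycle.
   Context: An oriented graph has at most one edge between any two vertices; $d$-regular means every vertex has in- and outdegree exactly $d$. Strongly $n$-connected means that the digraph has more than $n$ vertices and remains strongly connected after deleting any set of fewer than $n$ vertices. A Hamilton cycle is a directed cycle through all vertices. *)

theory Defs
  imports Main
begin

definition oriented_graph :: "'a set \<Rightarrow> ('a \<times> 'a) set \<Rightarrow> bool" where
  "oriented_graph V E \<longleftrightarrow> E \<subseteq> V \<times> V \<and> (\<forall>v. (v, v) \<notin> E) \<and>
     (\<forall>u v. (u, v) \<in> E \<longrightarrow> (v, u) \<notin> E)"

definition out_nbrs :: "('a \<times> 'a) set \<Rightarrow> 'a \<Rightarrow> 'a set" where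
  "out_nbrs E v = {u. (v, u) \<in> E}"

definition in_nbrs :: "('a \<times> 'a) set \<Rightarrow> 'a \<Rightarrow> 'a set" where
  "in_nbrs E v = {u. (u, v) \<in> E}"

definition regular_digraph :: "nat \<Rightarrow> 'a set \<Rightarrow> ('a \<times> 'a) set \<Rightarrow> bool" where
  "regular_digraph d V E \<longleftrightarrow>
     (\<forall>v\<in>V. card (out_nbrs E v) = d \<and> card (in_nbrs E v) = d)"

definition strongly_connected :: "'a set \<Rightarrow> ('a \<times> 'a) set \<Rightarrow> bool" where
  "strongly_connected V E \<longleftrightarrow> (\<forall>u\<in>V. \<forall>v\<in>V. (u, v) \<in> (E \<inter> (V \<times> V))\<^sup>*)"

definition strongly_n_connected :: "nat \<Rightarrow> 'a set \<Rightarrow> ('a \<times> 'a) set \<Rightarrow> bool" where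
  "strongly_n_connected n V E \<longleftrightarrow> card V > n \<and>
     (\<forall>S. S \<subseteq> V \<and> card S < n \<longrightarrow>
        strongly_connected (V - S) (E \<inter> ((V - S) \<times> (V - S))))"

definition hamiltonian :: "'a set \<Rightarrow> ('a \<times> 'a) set \<Rightarrow> bool" where
  "hamiltonian V E \<longleftrightarrow> (\<exists>vs. vs \<noteq> [] \<and> distinct vs \<and> set vs = V \<and>
     (\<forall>i < length vs. (vs ! i, vs ! ((i + 1) mod length vs)) \<in> E))"

end

theory Submission
  imports Defs "HOL-Library.Countable" "HOL-Library.Disjoint_Sets"
begin

text \<open>
  The graph consists of a ring of four blocks \<open>Y1 \<Rightarrow> A \<Rightarrow> Y2 \<Rightarrow> B \<Rightarrow> Y1\<close> of sizes
  \<open>2n, 2n, 2n - 1, 2n\<close>, consecutive blocks being completely joined, together with two copies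
  \<open>X 0\<close>, \<open>X 1\<close> of the rotational tournament on \<open>4n + 1\<close> vertices. In copy \<open>c\<close> the \<open>n\<close> arcs
  \<open>k \<rightarrow> k + 2n\<close> (\<open>k < n\<close>) are rerouted through the ring as \<open>X c k \<rightarrow> B c k\<close> and
  \<open>A c k \<rightarrow> X c (k + 2n)\<close>, which keeps all in- and outdegrees equal to \<open>2n\<close>.

  A Hamilton cycle must leave each copy \<open>X c\<close>, and it can only do so into \<open>B\<close>. As all
  out-neighbours of the \<open>2n - 1\<close> vertices of \<open>Y2\<close> also lie in \<open>B\<close>, the cycle would give
  \<open>2n + 1\<close> distinct successors in the \<open>2n\<close>-element block \<open>B\<close>.

  After deleting fewer than \<open>n\<close> vertices, every ring block, some exit pair
  \<open>X c k \<rightarrow> B c k\<close> and some entry pair \<open>A c k \<rightarrow> X c (k + 2n)\<close> survive, and cyclically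
  consecutive survivors of each copy are at most \<open>n\<close> apart, hence joined by an arc. So every
  survivor lies on a closed walk through a fixed surviving vertex of \<open>Y1\<close>.
\<close>

lemma rtrancl_map:
  assumes "(a, b) \<in> R\<^sup>*" and "\<And>x y. (x, y) \<in> R \<Longrightarrow> (f x, f y) \<in> R'"
  shows "(f a, f b) \<in> R'\<^sup>*"
  using assms(1)
proof (induction rule: rtrancl_induct)
  case (step y z)
  then show ?case using assms(2) by (meson rtrancl.rtrancl_into_rtrancl)
qed simp

lemma oriented_graph_image:
  assumes "inj f" and "oriented_graph V E"
  shows "oriented_graph (f ` V) (map_prod f f ` E)"
  using assms unfolding oriented_graph_def by (auto simp: inj_eq)

lemma out_nbrs_image: "inj f \<Longrightarrow> out_nbrs (map_prod f f ` E) (f v) = f ` out_nbrs E v"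
  unfolding out_nbrs_def by (auto simp: inj_eq)

lemma in_nbrs_image: "inj f \<Longrightarrow> in_nbrs (map_prod f f ` E) (f v) = f ` in_nbrs E v"
  unfolding in_nbrs_def by (auto simp: inj_eq)

lemma regular_digraph_image:
  assumes "inj f" and "regular_digraph d V E"
  shows "regular_digraph d (f ` V) (map_prod f f ` E)"
  using assms unfolding regular_digraph_def
  by (auto simp: out_nbrs_image in_nbrs_image card_image inj_on_subset)

lemma strongly_connected_image:
  assumes "inj f" and "strongly_connected V E"
  shows "strongly_connected (f ` V) (map_prod f f ` E)"
  unfolding strongly_connected_def
proof clarify
  fix u v assume "u \<in> V" "v \<in> V"
  then have "(u, v) \<in> (E \<inter> V \<times> V)\<^sup>*" using assms(2) unfolding strongly_connected_def by blast
  then show "(f u, f v) \<in> (map_prod f f ` E \<inter> f ` V \<times> f ` V)\<^sup>*"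
    by (rule rtrancl_map) auto
qed

lemma strongly_n_connected_image:
  assumes f: "inj f" and conn: "strongly_n_connected n V E"
  shows "strongly_n_connected n (f ` V) (map_prod f f ` E)"
  unfolding strongly_n_connected_def
proof (intro conjI allI impI)
  show "n < card (f ` V)"
    using conn f unfolding strongly_n_connected_def by (simp add: card_image inj_on_subset)
  fix S' assume S': "S' \<subseteq> f ` V \<and> card S' < n"
  define S where "S = V \<inter> f -` S'"
  have "f ` S = S'" using S' by (auto simp: S_def)
  then have "card S < n" using S' f by (metis card_image inj_on_subset subset_UNIV)
  moreover have "S \<subseteq> V" by (simp add: S_def)
  ultimately have "strongly_connected (V - S) (Restr E (V - S))"
    using conn unfolding strongly_n_connected_def by blast
  then have "strongly_connected (f ` (V - S)) (map_prod f f ` Restr E (V - S))"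
    by (rule strongly_connected_image[OF f])
  moreover have "f ` (V - S) = f ` V - S'" using S' f by (auto simp: S_def inj_eq)
  moreover have "map_prod f f ` Restr E (V - S) = Restr (map_prod f f ` E) (f ` (V - S))"
    using f by (auto simp: inj_eq)
  ultimately show "strongly_connected (f ` V - S') (Restr (map_prod f f ` E) (f ` V - S'))"
    by simp
qed

lemma hamiltonian_imageD:
  assumes f: "inj f" and "hamiltonian (f ` V) (map_prod f f ` E)"
  shows "hamiltonian V E"
proof -
  obtain vs where vs: "vs \<noteq> []" "distinct vs" "set vs = f ` V"
    and cyc: "\<forall>i < length vs. (vs ! i, vs ! ((i + 1) mod length vs)) \<in> map_prod f f ` E"
    using assms(2) unfolding hamiltonian_def by blast
  define ws where "ws = map (inv f) vs"
  have "map f ws = vs"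
    unfolding ws_def map_map by (rule map_idI) (use vs(3) in \<open>auto simp: f_inv_into_f\<close>)
  then have "ws \<noteq> [] \<and> distinct ws \<and> set ws = V \<and>
      (\<forall>i < length ws. (ws ! i, ws ! ((i + 1) mod length ws)) \<in> E)"
    using vs cyc f by (auto simp: distinct_map inj_image_eq_iff inj_eq)
  then show ?thesis unfolding hamiltonian_def by blast
qed

lemma strongly_connectedI_hub:
  assumes "h \<in> V" and "\<And>v. v \<in> V \<Longrightarrow> (h, v) \<in> (Restr E V)\<^sup>* \<and> (v, h) \<in> (Restr E V)\<^sup>*"
  shows "strongly_connected V E"
  unfolding strongly_connected_def using assms by (meson rtrancl_trans)

lemma strongly_connected_Restr_iff: "strongly_connected V (Restr E V) \<longleftrightarrow> strongly_connected V E"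
  by (simp add: strongly_connected_def Int_assoc)

lemma strongly_0_connected_iff: "strongly_n_connected 0 V E \<longleftrightarrow> 0 < card V"
  unfolding strongly_n_connected_def by simp

lemma cyclic_successor_closed:
  fixes L :: nat
  assumes "i \<in> I" "i < L" and closed: "\<And>j. j \<in> I \<Longrightarrow> j < L \<Longrightarrow> (j + 1) mod L \<in> I"
  shows "{..<L} \<subseteq> I"
proof
  have along: "(i + d) mod L \<in> I" for d
  proof (induction d)
    case (Suc d)
    then show ?case using closed[of "(i + d) mod L"] \<open>i < L\<close> by (simp add: mod_Suc_eq)
  qed (use assms in simp)
  fix j assume "j \<in> {..<L}"
  then have "(i + (L + j - i)) mod L = j" using \<open>i < L\<close> by simp
  then show "j \<in> I" using along by metis
qed

lemma hamiltonian_successor: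
  assumes "hamiltonian V E"
  obtains \<sigma> where "inj_on \<sigma> V" and "\<And>v. v \<in> V \<Longrightarrow> (v, \<sigma> v) \<in> E"
    and "\<And>U. U \<subseteq> V \<Longrightarrow> U \<noteq> {} \<Longrightarrow> U \<noteq> V \<Longrightarrow> \<exists>u\<in>U. \<sigma> u \<notin> U"
proof -
  obtain vs where vs: "vs \<noteq> []" "distinct vs" "set vs = V"
    and cyc: "\<forall>i < length vs. (vs ! i, vs ! ((i + 1) mod length vs)) \<in> E"
    using assms unfolding hamiltonian_def by blast
  define L where "L = length vs"
  define pos where "pos = inv_into {..<L} ((!) vs)"
  define \<sigma> where "\<sigma> v = vs ! ((pos v + 1) mod L)" for v
  have L: "0 < L" using vs(1) by (simp add: L_def)
  have bij: "bij_betw ((!) vs) {..<L} V" using vs by (simp add: L_def bij_betw_nth)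
  have pos: "pos v < L" "vs ! pos v = v" if "v \<in> V" for v
    using that bij_betw_inv_into_left[OF bij] bij_betw_imp_surj_on[OF bij] inv_into_into[of v "(!) vs"]
    by (auto simp: pos_def f_inv_into_f)
  have "inj_on \<sigma> V"
  proof (rule inj_onI)
    fix v w assume vw: "v \<in> V" "w \<in> V" "\<sigma> v = \<sigma> w"
    then have "(pos v + 1) mod L = (pos w + 1) mod L"
      using vs(2) L by (simp add: \<sigma>_def L_def nth_eq_iff_index_eq)
    then have "pos v = pos w" using pos vw by (auto simp: mod_Suc split: if_splits)
    then show "v = w" using pos vw by metis
  qed
  moreover have "(v, \<sigma> v) \<in> E" if "v \<in> V" for v
    using cyc pos[OF that] by (auto simp: \<sigma>_def L_def)
  moreover have "\<exists>u\<in>U. \<sigma> u \<notin> U" if U: "U \<subseteq> V" "U \<noteq> {}" "U \<noteq> V" for U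
  proof (rule ccontr)
    assume "\<not> ?thesis"
    then have closed: "(j + 1) mod L \<in> {i. vs ! i \<in> U}" if "j \<in> {i. vs ! i \<in> U}" "j < L" for j
      using that pos vs(2) U(1) by (metis \<sigma>_def L_def mem_Collect_eq nth_eq_iff_index_eq subsetD)
    obtain u where "u \<in> U" using U(2) by blast
    then have "{..<L} \<subseteq> {i. vs ! i \<in> U}"
      using pos U(1) by (intro cyclic_successor_closed[OF _ _ closed]) auto
    then have "V \<subseteq> U" using pos by fastforce
    with U show False by blast
  qed
  ultimately show thesis using that by blast
qed

lemma disjoint_family_avoids_small_set:
  assumes "finite S" and "card S < n" and "disjoint_family_on P {..<n}"
  obtains i where "i < n" and "P i \<inter> S = {}"
proof -
  have "\<exists>i<n. P i \<inter> S = {}"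
  proof (rule ccontr)
    assume "\<not> ?thesis"
    then have "\<forall>i\<in>{..<n}. \<exists>x. x \<in> P i \<inter> S" by blast
    then obtain f where f: "\<forall>i\<in>{..<n}. f i \<in> P i \<inter> S" by (metis bchoice)
    have "inj_on f {..<n}"
    proof (rule inj_onI)
      fix i j assume "i \<in> {..<n}" "j \<in> {..<n}" "f i = f j"
      moreover have "f i \<in> P i" "f j \<in> P j" using f \<open>i \<in> {..<n}\<close> \<open>j \<in> {..<n}\<close> by auto
      ultimately have "P i \<inter> P j \<noteq> {}" by auto
      then show "i = j" using assms(3) \<open>i \<in> {..<n}\<close> \<open>j \<in> {..<n}\<close>
        unfolding disjoint_family_on_def by blast
    qed
    moreover have "f ` {..<n} \<subseteq> S" using f by blast
    ultimately have "card {..<n} \<le> card S" using assms(1) by (rule card_inj_on_le)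
    with assms(2) show False by simp
  qed
  then show thesis using that by blast
qed

lemma rtrancl_by_short_steps:
  fixes W :: "nat set"
  assumes W: "W \<subseteq> {..<N}" and few_missing: "card ({..<N} - W) < m"
    and step: "\<And>k l. k \<in> W \<Longrightarrow> l \<in> W \<Longrightarrow> k < l \<Longrightarrow> l \<le> k + m \<Longrightarrow> (k, l) \<in> R"
    and a: "a \<in> W"
  shows "b \<in> W \<Longrightarrow> a \<le> b \<Longrightarrow> (a, b) \<in> R\<^sup>*"
proof (induction b rule: less_induct)
  case (less b)
  show ?case
  proof (cases "a = b")
    case False
    define C where "C = {c \<in> W. a \<le> c \<and> c < b}"
    have "a \<in> C" "finite C" using a False less.prems by (auto simp: C_def)
    define c where "c = Max C"
    have c: "c \<in> C" unfolding c_def using \<open>a \<in> C\<close> \<open>finite C\<close> by (intro Max_in) auto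
    have "{c<..<b} \<subseteq> {..<N} - W"
    proof
      fix x assume x: "x \<in> {c<..<b}"
      then have "x \<notin> C" using \<open>finite C\<close> c_def by (meson Max_ge greaterThanLessThan_iff leD)
      then show "x \<in> {..<N} - W" using x c less.prems W by (auto simp: C_def)
    qed
    then have "card {c<..<b} < m"
      using few_missing card_mono[of "{..<N} - W"] by (meson finite_Diff finite_lessThan le_less_trans)
    then have "(c, b) \<in> R" using c less.prems by (intro step) (auto simp: C_def)
    moreover have "(a, c) \<in> R\<^sup>*" using less.IH c by (auto simp: C_def)
    ultimately show ?thesis by simp
  qed simp
qed

text \<open>The rotational tournament on \<open>{..<4n+1}\<close> has the arcs \<open>k \<rightarrow> l\<close> with
  \<open>(l - k) mod (4n + 1) \<in> {1..2n}\<close>; the gadget omits its arcs \<open>k \<rightarrow> k + 2n\<close> for \<open>k < n\<close>.\<close>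

definition gadget_arc :: "nat \<Rightarrow> nat \<Rightarrow> nat \<Rightarrow> bool" where
  "gadget_arc n k l \<longleftrightarrow> ((k < l \<and> l \<le> k + 2*n) \<or> l + 2*n < k) \<and> \<not> (k < n \<and> l = k + 2*n)"

lemma gadget_arc_irrefl: "\<not> gadget_arc n k k"
  by (simp add: gadget_arc_def)

lemma gadget_arc_asym: "gadget_arc n k l \<Longrightarrow> \<not> gadget_arc n l k"
  by (auto simp: gadget_arc_def)

lemma gadget_arc_short: "0 < n \<Longrightarrow> k < l \<Longrightarrow> l \<le> k + n \<Longrightarrow> gadget_arc n k l"
  by (auto simp: gadget_arc_def)

lemma gadget_arc_wrap: "l < n \<Longrightarrow> 3*n < k \<Longrightarrow> gadget_arc n k l"
  by (auto simp: gadget_arc_def)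

lemma card_gadget_out:
  assumes "k < 4*n+1"
  shows "card {l. l < 4*n+1 \<and> gadget_arc n k l} + (if k < n then 1 else 0) = 2*n"
proof -
  let ?fwd = "{k<..min (k + 2*n) (4*n)} - (if k < n then {k + 2*n} else {})"
  have "{l. l < 4*n+1 \<and> gadget_arc n k l} = ?fwd \<union> {..<k - 2*n}"
    using assms by (auto simp: gadget_arc_def split: if_splits)
  moreover have "card ?fwd = min (k + 2*n) (4*n) - k - (if k < n then 1 else 0)"
    using assms by (auto simp: card_Diff_singleton)
  moreover have "?fwd \<inter> {..<k - 2*n} = {}" by auto
  ultimately show ?thesis using assms by (auto simp: card_Un_disjoint)
qed

lemma card_gadget_in:
  assumes "k < 4*n+1"
  shows "card {l. l < 4*n+1 \<and> gadget_arc n l k} + (if 2*n \<le> k \<and> k < 3*n then 1 else 0) = 2*n"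
proof -
  let ?bwd = "{k - 2*n..<k} - (if 2*n \<le> k \<and> k < 3*n then {k - 2*n} else {})"
  have "{l. l < 4*n+1 \<and> gadget_arc n l k} = ?bwd \<union> {k + 2*n<..<4*n+1}"
    using assms by (auto simp: gadget_arc_def split: if_splits)
  moreover have "card ?bwd = k - (k - 2*n) - (if 2*n \<le> k \<and> k < 3*n then 1 else 0)"
    using assms by (auto simp: card_Diff_singleton)
  moreover have "?bwd \<inter> {k + 2*n<..<4*n+1} = {}" by auto
  ultimately show ?thesis using assms by (auto simp: card_Un_disjoint)
qed

lemma gadget_strongly_connected:
  assumes n: "0 < n" and W: "W \<subseteq> {..<4*n+1}" and few_missing: "card ({..<4*n+1} - W) < n"
    and "a \<in> W" "b \<in> W"
  shows "(a, b) \<in> {(k, l). k \<in> W \<and> l \<in> W \<and> gadget_arc n k l}\<^sup>*"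
    (is "_ \<in> ?R\<^sup>*")
proof -
  have fwd: "(a, b) \<in> ?R\<^sup>*" if "a \<in> W" "b \<in> W" "a \<le> b" for a b
    by (rule rtrancl_by_short_steps[OF W few_missing _ that]) (simp add: gadget_arc_short[OF n])
  have gap: "card G < n" if "G \<subseteq> {..<4*n+1} - W" for G
    using few_missing card_mono[OF _ that] by simp
  show ?thesis
  proof (cases "a \<le> b")
    case False
    have "finite W" using W finite_subset by blast
    define t u where "t = Max W" and "u = Min W"
    have "t \<in> W" "u \<in> W" "a \<le> t" "u \<le> b"
      using \<open>finite W\<close> \<open>a \<in> W\<close> \<open>b \<in> W\<close> by (auto simp: t_def u_def intro: Max_in Min_in)
    have "{t<..<4*n+1} \<subseteq> {..<4*n+1} - W"
      using \<open>finite W\<close> by (auto simp: t_def leD)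
    moreover have "{..<u} \<subseteq> {..<4*n+1} - W"
      using \<open>finite W\<close> \<open>u \<in> W\<close> W by (auto simp: u_def leD)
    ultimately have "card {t<..<4*n+1} < n" "card {..<u} < n" by (simp_all only: gap)
    then have "(t, u) \<in> ?R" using \<open>t \<in> W\<close> \<open>u \<in> W\<close> gadget_arc_wrap by auto
    with fwd[OF \<open>a \<in> W\<close> \<open>t \<in> W\<close> \<open>a \<le> t\<close>] fwd[OF \<open>u \<in> W\<close> \<open>b \<in> W\<close> \<open>u \<le> b\<close>]
    show ?thesis by (meson rtrancl_into_rtrancl rtrancl_trans)
  qed (simp add: fwd assms)
qed

datatype vertex = Y1 nat | A nat nat | Y2 nat | B nat nat | X nat nat

instance vertex :: countable
  by countable_datatype

definition verts :: "nat \<Rightarrow> vertex set" where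
  "verts n = Y1 ` {..<2*n} \<union> case_prod A ` ({..<2} \<times> {..<n}) \<union> Y2 ` {..<2*n-1}
     \<union> case_prod B ` ({..<2} \<times> {..<n}) \<union> case_prod X ` ({..<2} \<times> {..<4*n+1})"

definition arcs :: "nat \<Rightarrow> (vertex \<times> vertex) set" where
  "arcs n = {(Y1 i, A c k) | i c k. i < 2*n \<and> c < 2 \<and> k < n}
     \<union> {(A c k, Y2 i) | c k i. c < 2 \<and> k < n \<and> i < 2*n-1}
     \<union> {(Y2 i, B c k) | i c k. i < 2*n-1 \<and> c < 2 \<and> k < n}
     \<union> {(B c k, Y1 i) | c k i. c < 2 \<and> k < n \<and> i < 2*n}
     \<union> {(X c k, X c l) | c k l. c < 2 \<and> k < 4*n+1 \<and> l < 4*n+1 \<and> gadget_arc n k l}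
     \<union> {(X c k, B c k) | c k. c < 2 \<and> k < n}
     \<union> {(A c k, X c (k + 2*n)) | c k. c < 2 \<and> k < n}"

lemma mem_verts [simp]:
  "Y1 i \<in> verts n \<longleftrightarrow> i < 2*n"
  "A c k \<in> verts n \<longleftrightarrow> c < 2 \<and> k < n"
  "Y2 i \<in> verts n \<longleftrightarrow> i < 2*n-1"
  "B c k \<in> verts n \<longleftrightarrow> c < 2 \<and> k < n"
  "X c k \<in> verts n \<longleftrightarrow> c < 2 \<and> k < 4*n+1"
  by (auto simp: verts_def)

lemma finite_verts: "finite (verts n)"
  by (simp add: verts_def)

lemma card_verts: "0 < n \<Longrightarrow> card (verts n) = 16*n+1"
  unfolding verts_def
  by (subst card_Un_disjoint, auto simp: card_image inj_on_def card_cartesian_product)+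

lemma arc_from_simps [simp]:
  "(Y1 i, w) \<in> arcs n \<longleftrightarrow> i < 2*n \<and> (\<exists>c<2. \<exists>k<n. w = A c k)"
  "(A c k, w) \<in> arcs n \<longleftrightarrow> c < 2 \<and> k < n \<and> ((\<exists>i<2*n-1. w = Y2 i) \<or> w = X c (k + 2*n))"
  "(Y2 i, w) \<in> arcs n \<longleftrightarrow> i < 2*n-1 \<and> (\<exists>c<2. \<exists>k<n. w = B c k)"
  "(B c k, w) \<in> arcs n \<longleftrightarrow> c < 2 \<and> k < n \<and> (\<exists>i<2*n. w = Y1 i)"
  "(X c k, w) \<in> arcs n \<longleftrightarrow> c < 2 \<and> k < 4*n+1 \<and>
     ((\<exists>l<4*n+1. gadget_arc n k l \<and> w = X c l) \<or> (k < n \<and> w = B c k))"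
  by (auto simp: arcs_def)

lemma arc_to_simps:
  "(w, Y1 i) \<in> arcs n \<longleftrightarrow> i < 2*n \<and> (\<exists>c<2. \<exists>k<n. w = B c k)"
  "(w, A c k) \<in> arcs n \<longleftrightarrow> c < 2 \<and> k < n \<and> (\<exists>i<2*n. w = Y1 i)"
  "(w, Y2 i) \<in> arcs n \<longleftrightarrow> i < 2*n-1 \<and> (\<exists>c<2. \<exists>k<n. w = A c k)"
  "(w, B c k) \<in> arcs n \<longleftrightarrow> c < 2 \<and> k < n \<and> ((\<exists>i<2*n-1. w = Y2 i) \<or> w = X c k)"
  "(w, X c l) \<in> arcs n \<longleftrightarrow> c < 2 \<and> l < 4*n+1 \<and>
     ((\<exists>k<4*n+1. gadget_arc n k l \<and> w = X c k) \<or> (2*n \<le> l \<and> l < 3*n \<and> w = A c (l - 2*n)))"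
  by (auto simp: arcs_def)

lemma arcs_subset_verts: "arcs n \<subseteq> verts n \<times> verts n"
  by (auto simp: arcs_def gadget_arc_def)

lemma oriented_graph_arcs: "oriented_graph (verts n) (arcs n)"
  unfolding oriented_graph_def
proof (intro conjI allI impI arcs_subset_verts)
  show "(v, v) \<notin> arcs n" for v by (cases v) (auto simp: gadget_arc_irrefl)
  show "(v, u) \<notin> arcs n" if "(u, v) \<in> arcs n" for u v
    using that by (cases u; cases v) (auto dest: gadget_arc_asym)
qed

lemma out_nbrs_arcs:
  "i < 2*n \<Longrightarrow> out_nbrs (arcs n) (Y1 i) = case_prod A ` ({..<2} \<times> {..<n})"
  "c < 2 \<Longrightarrow> k < n \<Longrightarrow> out_nbrs (arcs n) (A c k) = insert (X c (k + 2*n)) (Y2 ` {..<2*n-1})"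
  "i < 2*n-1 \<Longrightarrow> out_nbrs (arcs n) (Y2 i) = case_prod B ` ({..<2} \<times> {..<n})"
  "c < 2 \<Longrightarrow> k < n \<Longrightarrow> out_nbrs (arcs n) (B c k) = Y1 ` {..<2*n}"
  "c < 2 \<Longrightarrow> k < 4*n+1 \<Longrightarrow> out_nbrs (arcs n) (X c k) =
     X c ` {l. l < 4*n+1 \<and> gadget_arc n k l} \<union> (if k < n then {B c k} else {})"
  by (auto simp: out_nbrs_def)

lemma in_nbrs_arcs:
  "i < 2*n \<Longrightarrow> in_nbrs (arcs n) (Y1 i) = case_prod B ` ({..<2} \<times> {..<n})"
  "c < 2 \<Longrightarrow> k < n \<Longrightarrow> in_nbrs (arcs n) (A c k) = Y1 ` {..<2*n}"
  "i < 2*n-1 \<Longrightarrow> in_nbrs (arcs n) (Y2 i) = case_prod A ` ({..<2} \<times> {..<n})"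
  "c < 2 \<Longrightarrow> k < n \<Longrightarrow> in_nbrs (arcs n) (B c k) = insert (X c k) (Y2 ` {..<2*n-1})"
  "c < 2 \<Longrightarrow> l < 4*n+1 \<Longrightarrow> in_nbrs (arcs n) (X c l) =
     X c ` {k. k < 4*n+1 \<and> gadget_arc n k l} \<union> (if 2*n \<le> l \<and> l < 3*n then {A c (l - 2*n)} else {})"
  by (auto simp: in_nbrs_def arc_to_simps)

lemma regular_digraph_arcs:
  assumes "0 < n"
  shows "regular_digraph (2*n) (verts n) (arcs n)"
  unfolding regular_digraph_def
proof
  fix v assume v: "v \<in> verts n"
  have AB_blocks: "card (case_prod A ` ({..<2} \<times> {..<n})) = 2*n" "card (case_prod B ` ({..<2} \<times> {..<n})) = 2*n"
    by (simp_all add: card_image inj_on_def card_cartesian_product)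
  have Y_blocks: "card (Y1 ` {..<2*n}) = 2*n" "card (Y2 ` {..<2*n-1}) + 1 = 2*n"
    using assms by (simp_all add: card_image inj_on_def)
  show "card (out_nbrs (arcs n) v) = 2*n \<and> card (in_nbrs (arcs n) v) = 2*n"
  proof (cases v)
    case (X c k)
    have "inj (X c)" by (simp add: inj_def)
    then have "card (X c ` {l. l < 4*n+1 \<and> gadget_arc n k l}) + (if k < n then 1 else 0) = 2*n"
      and "card (X c ` {l. l < 4*n+1 \<and> gadget_arc n l k}) + (if 2*n \<le> k \<and> k < 3*n then 1 else 0) = 2*n"
      using v X card_gadget_out card_gadget_in by (simp_all add: card_image inj_on_subset)
    then show ?thesis
      using v X by (auto simp: out_nbrs_arcs in_nbrs_arcs card_insert_if split: if_splits)
  qed (use v AB_blocks Y_blocks in \<open>auto simp: out_nbrs_arcs in_nbrs_arcs card_insert_if\<close>)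
qed

context
  fixes n :: nat and S :: "vertex set"
  assumes n_pos: "0 < n" and deleted_verts: "S \<subseteq> verts n" and few_deleted: "card S < n"
begin

lemma finite_deleted: "finite S"
  using deleted_verts finite_verts finite_subset by blast

lemma exists_undeleted_member:
  assumes "disjoint_family_on P {..<n}"
  obtains i where "i < n" and "P i \<inter> S = {}"
  using disjoint_family_avoids_small_set[OF finite_deleted few_deleted assms] by blast

lemma exists_undeleted_image:
  assumes "inj f"
  obtains i where "i < n" and "f i \<notin> S"
proof -
  have "disjoint_family_on (\<lambda>i. {f i}) {..<n}"
    using assms by (auto simp: disjoint_family_on_def inj_eq)
  then show thesis using that by (rule exists_undeleted_member) auto
qed

lemma undeleted_arc:
  assumes "(u, v) \<in> arcs n" "u \<notin> S" "v \<notin> S"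
  shows "(u, v) \<in> (Restr (arcs n) (verts n - S))\<^sup>*"
  using assms arcs_subset_verts by blast

lemma gadget_copy_reachable:
  assumes c: "c < 2" and k: "k < 4*n+1" "X c k \<notin> S" and l: "l < 4*n+1" "X c l \<notin> S"
  shows "(X c k, X c l) \<in> (Restr (arcs n) (verts n - S))\<^sup>*"
proof -
  define W where "W = {k. k < 4*n+1 \<and> X c k \<notin> S}"
  have "X c ` ({..<4*n+1} - W) \<subseteq> S" by (auto simp: W_def)
  then have "card ({..<4*n+1} - W) \<le> card S"
    using finite_deleted card_mono card_image[of "X c"] by (metis inj_on_def vertex.inject(5))
  then have "card ({..<4*n+1} - W) < n" using few_deleted by linarith
  then have "(k, l) \<in> {(k, l). k \<in> W \<and> l \<in> W \<and> gadget_arc n k l}\<^sup>*"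
    using gadget_strongly_connected[OF n_pos, of W] k l by (auto simp: W_def)
  then show ?thesis
    by (rule rtrancl_map) (auto simp: W_def c)
qed

lemma ring_reachable:
  assumes "u \<in> verts n - S" "v \<in> verts n - S" "\<forall>c k. u \<noteq> X c k" "\<forall>c k. v \<noteq> X c k"
  shows "(u, v) \<in> (Restr (arcs n) (verts n - S))\<^sup>*"
proof -
  let ?R = "(Restr (arcs n) (verts n - S))\<^sup>*"
  obtain h where "h < n" "Y1 h \<notin> S" by (rule exists_undeleted_image[of Y1]) (auto simp: inj_def)
  obtain a where "a < n" "A 0 a \<notin> S" by (rule exists_undeleted_image[of "A 0"]) (auto simp: inj_def)
  obtain y where "y < n" "Y2 y \<notin> S" by (rule exists_undeleted_image[of Y2]) (auto simp: inj_def)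
  obtain b where "b < n" "B 0 b \<notin> S" by (rule exists_undeleted_image[of "B 0"]) (auto simp: inj_def)
  note reps = \<open>h < n\<close> \<open>a < n\<close> \<open>y < n\<close> \<open>b < n\<close>
  have "(Y1 h, A 0 a) \<in> ?R" "(A 0 a, Y2 y) \<in> ?R" "(Y2 y, B 0 b) \<in> ?R" "(B 0 b, Y1 h) \<in> ?R"
    using reps \<open>Y1 h \<notin> S\<close> \<open>A 0 a \<notin> S\<close> \<open>Y2 y \<notin> S\<close> \<open>B 0 b \<notin> S\<close> n_pos
    by (auto intro!: undeleted_arc)
  then have on_cycle: "(Y1 h, r) \<in> ?R \<and> (r, Y1 h) \<in> ?R" if "r \<in> {Y1 h, A 0 a, Y2 y, B 0 b}" for r
    using that by (auto intro: rtrancl_trans)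
  have between: "(Y1 h, w) \<in> ?R \<and> (w, Y1 h) \<in> ?R"
    if "(p, w) \<in> ?R" "(w, q) \<in> ?R" "p \<in> {Y1 h, A 0 a, Y2 y, B 0 b}" "q \<in> {Y1 h, A 0 a, Y2 y, B 0 b}"
    for p q w
    using that on_cycle by (meson rtrancl_trans)
  have hub: "(Y1 h, w) \<in> ?R \<and> (w, Y1 h) \<in> ?R" if w: "w \<in> verts n - S" "\<forall>c k. w \<noteq> X c k" for w
  proof (cases w)
    case (Y1 i)
    then show ?thesis using w reps \<open>A 0 a \<notin> S\<close> \<open>B 0 b \<notin> S\<close>
      by (intro between[of "B 0 b" _ "A 0 a"]) (auto intro!: undeleted_arc)
  next
    case (A c k)
    then show ?thesis using w reps \<open>Y1 h \<notin> S\<close> \<open>Y2 y \<notin> S\<close>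
      by (intro between[of "Y1 h" _ "Y2 y"]) (auto intro!: undeleted_arc)
  next
    case (Y2 i)
    then show ?thesis using w reps \<open>A 0 a \<notin> S\<close> \<open>B 0 b \<notin> S\<close>
      by (intro between[of "A 0 a" _ "B 0 b"]) (auto intro!: undeleted_arc)
  next
    case (B c k)
    then show ?thesis using w reps \<open>Y2 y \<notin> S\<close> \<open>Y1 h \<notin> S\<close>
      by (intro between[of "Y2 y" _ "Y1 h"]) (auto intro!: undeleted_arc)
  qed (use w in blast)
  show ?thesis using hub[of u] hub[of v] assms by (meson rtrancl_trans)
qed

lemma strongly_connected_after_deletion: "strongly_connected (verts n - S) (arcs n)"
proof -
  let ?R = "(Restr (arcs n) (verts n - S))\<^sup>*"
  obtain h where h: "h < n" "Y1 h \<notin> S" by (rule exists_undeleted_image[of Y1]) (auto simp: inj_def)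
  show ?thesis
  proof (rule strongly_connectedI_hub)
    show hub: "Y1 h \<in> verts n - S" using h by simp
    fix v assume v: "v \<in> verts n - S"
    show "(Y1 h, v) \<in> ?R \<and> (v, Y1 h) \<in> ?R"
    proof (cases "\<exists>c k. v = X c k")
      case True
      then obtain c k where X: "v = X c k" by blast
      obtain i where i: "i < n" "X c i \<notin> S" "B c i \<notin> S"
        using exists_undeleted_member[of "\<lambda>i. {X c i, B c i}"] by (auto simp: disjoint_family_on_def)
      obtain j where j: "j < n" "A c j \<notin> S" "X c (j + 2*n) \<notin> S"
        using exists_undeleted_member[of "\<lambda>j. {A c j, X c (j + 2*n)}"]
        by (auto simp: disjoint_family_on_def)
      have "(X c k, X c i) \<in> ?R" "(X c (j + 2*n), X c k) \<in> ?R"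
        using gadget_copy_reachable v X i j by auto
      moreover have "(X c i, B c i) \<in> ?R" "(A c j, X c (j + 2*n)) \<in> ?R"
        using v X i j by (auto intro!: undeleted_arc)
      moreover have "(B c i, Y1 h) \<in> ?R" "(Y1 h, A c j) \<in> ?R"
        using v X i j hub by (auto intro!: ring_reachable)
      ultimately show ?thesis using X by (meson rtrancl_trans)
    qed (use v hub ring_reachable in blast)
  qed
qed

end

lemma strongly_n_connected_arcs:
  assumes "0 < n"
  shows "strongly_n_connected n (verts n) (arcs n)"
  unfolding strongly_n_connected_def strongly_connected_Restr_iff
  using assms card_verts strongly_connected_after_deletion by auto

lemma not_hamiltonian_arcs:
  assumes n: "0 < n"
  shows "\<not> hamiltonian (verts n) (arcs n)"
proof
  assume "hamiltonian (verts n) (arcs n)"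
  then obtain \<sigma> where inj: "inj_on \<sigma> (verts n)" and arc: "\<And>v. v \<in> verts n \<Longrightarrow> (v, \<sigma> v) \<in> arcs n"
    and leave: "\<And>U. U \<subseteq> verts n \<Longrightarrow> U \<noteq> {} \<Longrightarrow> U \<noteq> verts n \<Longrightarrow> \<exists>u\<in>U. \<sigma> u \<notin> U"
    by (rule hamiltonian_successor) blast
  let ?B = "case_prod B ` ({..<2} \<times> {..<n})"
  have exit: "\<exists>k<4*n+1. \<sigma> (X c k) \<in> ?B" if "c < 2" for c
  proof -
    let ?U = "X c ` {..<4*n+1}"
    have "Y1 0 \<in> verts n" "Y1 0 \<notin> ?U" using n by auto
    then have "?U \<noteq> verts n" by blast
    moreover have "?U \<subseteq> verts n" "?U \<noteq> {}" using \<open>c < 2\<close> by auto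
    ultimately obtain u where u: "u \<in> ?U" "\<sigma> u \<notin> ?U" using leave[of ?U] by blast
    then obtain k where k: "k < 4*n+1" "u = X c k" by blast
    then have "(X c k, \<sigma> u) \<in> arcs n" using arc[of u] \<open>c < 2\<close> by simp
    then have "k < n" "\<sigma> u = B c k" using u(2) by auto
    moreover have "B c k \<in> ?B" using \<open>k < n\<close> \<open>c < 2\<close> by force
    ultimately have "\<sigma> (X c k) \<in> ?B" using k by simp
    then show ?thesis using k(1) by blast
  qed
  have "\<exists>k<4*n+1. \<sigma> (X 0 k) \<in> ?B" "\<exists>k<4*n+1. \<sigma> (X 1 k) \<in> ?B"
    using exit[of 0] exit[of 1] by simp_all
  then obtain k0 k1 where k: "k0 < 4*n+1" "k1 < 4*n+1" "\<sigma> (X 0 k0) \<in> ?B" "\<sigma> (X 1 k1) \<in> ?B"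
    by blast
  let ?P = "insert (X 0 k0) (insert (X 1 k1) (Y2 ` {..<2*n-1}))"
  have "\<sigma> (Y2 i) \<in> ?B" if "i < 2*n-1" for i
    using arc[of "Y2 i"] that by auto
  then have maps: "\<sigma> ` ?P \<subseteq> ?B" using k(3,4) by auto
  have "?P \<subseteq> verts n" using k(1,2) by auto
  then have "inj_on \<sigma> ?P" using inj by (rule inj_on_subset[rotated])
  then have "card ?P \<le> card ?B" using maps by (rule card_inj_on_le) simp
  moreover have "card ?P = 2*n + 1" using n by (auto simp: card_insert_if card_image inj_on_def)
  moreover have "card ?B = 2*n" by (simp add: card_image inj_on_def card_cartesian_product)
  ultimately show False by simp
qed

lemma not_hamiltonian_without_arcs: "\<not> hamiltonian V {}"
  unfolding hamiltonian_def by auto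

theorem proposition7p2:
  fixes n :: nat
  shows "\<exists>(V :: nat set) (E :: (nat \<times> nat) set).
           finite V \<and> card V = 16 * n + 1 \<and> oriented_graph V E \<and>
           regular_digraph (2 * n) V E \<and> strongly_n_connected n V E \<and>
           \<not> hamiltonian V E"
proof (cases "n = 0")
  case True
  \<comment> \<open>the construction would have the two vertices \<open>X 0 0\<close>, \<open>X 1 0\<close> here\<close>
  have "oriented_graph {0::nat} {} \<and> regular_digraph 0 {0::nat} {} \<and> strongly_n_connected 0 {0::nat} {}"
    by (simp add: oriented_graph_def regular_digraph_def out_nbrs_def in_nbrs_def strongly_0_connected_iff)
  then show ?thesis
    using True not_hamiltonian_without_arcs by (intro exI[of _ "{0::nat}"] exI[of _ "{}"]) simp
next
  case False
  then have n: "0 < n" by simp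
  let ?V = "to_nat ` verts n" and ?E = "map_prod to_nat to_nat ` arcs n"
  have "finite ?V" "card ?V = 16 * n + 1"
    using finite_verts card_verts[OF n] by (simp_all add: card_image)
  moreover have "oriented_graph ?V ?E" "regular_digraph (2 * n) ?V ?E" "strongly_n_connected n ?V ?E"
    using oriented_graph_arcs regular_digraph_arcs[OF n] strongly_n_connected_arcs[OF n]
    by (simp_all add: oriented_graph_image regular_digraph_image strongly_n_connected_image)
  moreover have "\<not> hamiltonian ?V ?E"
    using not_hamiltonian_arcs[OF n] hamiltonian_imageD[OF inj_to_nat] by blast
  ultimately show ?thesis by (intro exI[of _ ?V] exI[of _ ?E]) simp
qed

end
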